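(* Let $A=\{a_1,\ldots,a_n\}$ and $B=\{b_1,\ldots,b_m\}$ be finite point sets in $\mathbb{R}^2$ with $m\le n$. Let $t\in\mathbb{R}^2$ be such that $\|b_p+t-a_r\|\neq\|b_p+t-a_s\|$ for all $p\in\{1,\ldots,m\}$ and all $r\neq s$ in $\{1,\ldots,n\}$. Then every optimal matching for $t$ is an efficient matching for the set of preference lists $L=\{L_t(b_i)\mid i\in\{1,\ldots,m\}\}$.
   Context: A matching is an injective map $\pi:B\to A$; its cost at translation $t$ is $f(\pi,t)=\sum_{b\in B}\|b+t-\pi(b)\|^2$, and $\pi$ is optimal for $t$ if it minimizes $f(\cdot,t)$ over all injective maps. The preference list $L_t(b)$ of $b\in B$ is the list of the points of $A$ sorted by increasing distance from $b+t$. A matching $\pi$ is better than a distinct matching $\sigma$ if for each $b\in B$ either $\pi(b)=\sigma(b)$ or $\pi(b)$ appears before $\sigma(b)$ in $L_t(b)$. A matching is efficient (Pareto efficient) if no matching is better than it. *)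

theory Defs
  imports "HOL-Analysis.Analysis"
begin

type_synonym pt = "real ^ 2"

text \<open>A matching is an injective map from B into A (only its values on B matter).\<close>
definition matching :: "pt set \<Rightarrow> pt set \<Rightarrow> (pt \<Rightarrow> pt) \<Rightarrow> bool" where
  "matching A B \<pi> \<longleftrightarrow> inj_on \<pi> B \<and> \<pi> ` B \<subseteq> A"

definition cost :: "pt set \<Rightarrow> (pt \<Rightarrow> pt) \<Rightarrow> pt \<Rightarrow> real" where
  "cost B \<pi> t = (\<Sum>b\<in>B. (norm (b + t - \<pi> b))\<^sup>2)"

definition optimal :: "pt set \<Rightarrow> pt set \<Rightarrow> pt \<Rightarrow> (pt \<Rightarrow> pt) \<Rightarrow> bool" where
  "optimal A B t \<pi> \<longleftrightarrow> matching A B \<pi> \<and>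
     (\<forall>\<sigma>. matching A B \<sigma> \<longrightarrow> cost B \<pi> t \<le> cost B \<sigma> t)"

definition pref_list :: "pt set \<Rightarrow> pt \<Rightarrow> pt \<Rightarrow> pt list" where
  "pref_list A t b = sorted_key_list_of_set (\<lambda>a. norm (b + t - a)) A"

definition before :: "'a list \<Rightarrow> 'a \<Rightarrow> 'a \<Rightarrow> bool" where
  "before xs x y \<longleftrightarrow> (\<exists>i j. i < j \<and> j < length xs \<and> xs ! i = x \<and> xs ! j = y)"

definition better :: "pt set \<Rightarrow> pt set \<Rightarrow> pt \<Rightarrow> (pt \<Rightarrow> pt) \<Rightarrow> (pt \<Rightarrow> pt) \<Rightarrow> bool" where
  "better A B t \<pi> \<sigma> \<longleftrightarrow> (\<exists>b\<in>B. \<pi> b \<noteq> \<sigma> b) \<and>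
     (\<forall>b\<in>B. \<pi> b = \<sigma> b \<or> before (pref_list A t b) (\<pi> b) (\<sigma> b))"

definition efficient :: "pt set \<Rightarrow> pt set \<Rightarrow> pt \<Rightarrow> (pt \<Rightarrow> pt) \<Rightarrow> bool" where
  "efficient A B t \<sigma> \<longleftrightarrow> matching A B \<sigma> \<and>
     \<not> (\<exists>\<pi>. matching A B \<pi> \<and> better A B t \<pi> \<sigma>)"

end

theory Submission
  imports Defs
begin

text \<open>If the distances from b + t to the points of A are pairwise distinct, then appearing
  earlier in L_t(b) means being strictly closer to b + t. A matching that is better than an
  optimal one therefore never increases any summand of the cost and strictly decreases at
  least one, contradicting optimality.\<close>

lemma (in linorder) before_sorted_key_list_of_set_less:
  assumes inj: "inj_on f A" and bef: "before (sorted_key_list_of_set f A) x y"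
  shows "f x < f y"
proof -
  let ?xs = "sorted_key_list_of_set f A"
  interpret folding_insort_key "(\<le>)" "(<)" A f
    by unfold_locales (rule inj)
  have strict: "sorted_wrt (<) (map f ?xs)"
    by simp
  obtain i j where "i < j" "j < length ?xs" "?xs ! i = x" "?xs ! j = y"
    using bef unfolding before_def by blast
  then show ?thesis
    using sorted_wrt_nth_less[OF strict, of i j] by simp
qed

lemma before_pref_list_closer:
  assumes "inj_on (\<lambda>a. norm (b + t - a)) A" and "before (pref_list A t b) x y"
  shows "norm (b + t - x) < norm (b + t - y)"
  using before_sorted_key_list_of_set_less assms unfolding pref_list_def by fastforce

lemma better_cost_less:
  assumes "finite B"
    and distinct_dist: "\<And>b. b \<in> B \<Longrightarrow> inj_on (\<lambda>a. norm (b + t - a)) A"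
    and "better A B t \<rho> \<pi>"
  shows "cost B \<rho> t < cost B \<pi> t"
proof -
  have closer: "norm (b + t - \<rho> b) < norm (b + t - \<pi> b)" if "b \<in> B" "\<rho> b \<noteq> \<pi> b" for b
    using before_pref_list_closer[OF distinct_dist] assms(3) that
    unfolding better_def by blast
  have le: "(norm (b + t - \<rho> b))\<^sup>2 \<le> (norm (b + t - \<pi> b))\<^sup>2" if "b \<in> B" for b
    using closer[OF that] by (cases "\<rho> b = \<pi> b") (auto intro: power_mono)
  obtain b0 where b0: "b0 \<in> B" "\<rho> b0 \<noteq> \<pi> b0"
    using assms(3) unfolding better_def by blast
  have "(norm (b0 + t - \<rho> b0))\<^sup>2 < (norm (b0 + t - \<pi> b0))\<^sup>2"
    using closer[OF b0] by (intro power_strict_mono) auto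
  then show ?thesis
    unfolding cost_def using le b0 by (intro sum_strict_mono_ex1[OF assms(1)]) auto
qed

theorem lemma5:
  fixes A B :: "(real ^ 2) set" and t :: "real ^ 2" and \<pi> :: "real ^ 2 \<Rightarrow> real ^ 2"
  assumes "finite A" and "finite B" and "card B \<le> card A"
    and "\<And>b r s. b \<in> B \<Longrightarrow> r \<in> A \<Longrightarrow> s \<in> A \<Longrightarrow> r \<noteq> s \<Longrightarrow>
           norm (b + t - r) \<noteq> norm (b + t - s)"
    and "optimal A B t \<pi>"
  shows "efficient A B t \<pi>"
proof -
  have distinct_dist: "inj_on (\<lambda>a. norm (b + t - a)) A" if "b \<in> B" for b
    using assms(4)[OF that] unfolding inj_on_def by blast
  have "\<not> better A B t \<rho> \<pi>" if "matching A B \<rho>" for \<rho>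
    using better_cost_less[OF assms(2) distinct_dist] assms(5) that
    unfolding optimal_def by (meson not_le)
  with assms(5) show ?thesis
    unfolding efficient_def optimal_def by blast
qed

end
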